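(* An almost discrete (Tychonoff) space $X$ is weakly Grothendieck if and only if $t(X)=\omega$.
   Context: A space is almost discrete if it has exactly one non-isolated point. $C_p(X)$ is the space of continuous real-valued functions on $X$ with the pointwise convergence topology. A space $Z$ is a $g$-space if every subset $A\subseteq Z$ such that every infinite subset of $A$ has an accumulation point in $Z$ has compact closure in $Z$; $X$ is weakly Grothendieck if $C_p(X)$ is a $g$-space. $t(X)$ denotes the tightness of $X$. *)

theory Defs
  imports "HOL-Analysis.Analysis"
begin

definition tychonoff_space :: "'a topology \<Rightarrow> bool" where
  "tychonoff_space X \<equiv> t1_space X \<and> completely_regular_space X"

definition almost_discrete :: "'a topology \<Rightarrow> bool" where
  "almost_discrete X \<equiv> (\<exists>!x. x \<in> topspace X \<and> \<not> openin X {x})"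

definition Cp :: "'a topology \<Rightarrow> ('a \<Rightarrow> real) topology" where
  "Cp X = subtopology (product_topology (\<lambda>_. euclideanreal) (topspace X))
            {f \<in> extensional (topspace X). continuous_map X euclideanreal f}"

definition g_space :: "'b topology \<Rightarrow> bool" where
  "g_space Z \<equiv> (\<forall>A \<subseteq> topspace Z.
      (\<forall>B \<subseteq> A. infinite B \<longrightarrow> Z derived_set_of B \<noteq> {})
        \<longrightarrow> compactin Z (Z closure_of A))"

definition weakly_Grothendieck :: "'a topology \<Rightarrow> bool" where
  "weakly_Grothendieck X \<equiv> g_space (Cp X)"

definition countable_tightness :: "'a topology \<Rightarrow> bool" where
  "countable_tightness X \<equiv> (\<forall>A \<subseteq> topspace X. \<forall>x \<in> X closure_of A.
      \<exists>B \<subseteq> A. countable B \<and> x \<in> X closure_of B)"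

end

theory Submission
  imports Defs
begin

text \<open>Let p be the only non-isolated point, so that a real function on X is continuous iff it is
  continuous at p, and regard C_p(X) as a subspace of the product R^X.

  If t(X) = \<omega> and every infinite subset of A \<subseteq> C_p(X) accumulates in C_p(X), then A is
  pointwise bounded, so its closure in R^X is compact by Tychonoff's theorem. This closure lies in
  C_p(X): a discontinuity of a limit g at p is witnessed on a countable set C, and a sequence from A
  converging to g on C and at p has a cluster point in C_p(X), which must agree with g there.

  Conversely, if p is in the closure of A \<subseteq> X but of no countable subset of A, then every
  infinite set of indicators of finite subsets of A accumulates in C_p(X), since along a sequence
  their supports lie in a countable set that stays away from p. Their closure, if compact in
  C_p(X), would contain the indicator of A, which is discontinuous at p.\<close>

abbreviation pointwise_topology :: "'a set \<Rightarrow> ('a \<Rightarrow> real) topology" where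
  "pointwise_topology T \<equiv> product_topology (\<lambda>_. euclideanreal) T"

definition relatively_countably_compact :: "'b topology \<Rightarrow> 'b set \<Rightarrow> bool" where
  "relatively_countably_compact Z A \<longleftrightarrow> (\<forall>B\<subseteq>A. infinite B \<longrightarrow> Z derived_set_of B \<noteq> {})"

lemma g_space_iff_relatively_countably_compact:
  "g_space Z \<longleftrightarrow>
     (\<forall>A\<subseteq>topspace Z. relatively_countably_compact Z A \<longrightarrow> compactin Z (Z closure_of A))"
  by (simp add: g_space_def relatively_countably_compact_def)

lemma topspace_Cp:
  "topspace (Cp X) = {f \<in> extensional (topspace X). continuous_map X euclideanreal f}"
  by (auto simp: Cp_def PiE_def)

lemma topspace_Cp_subset: "topspace (Cp X) \<subseteq> topspace (pointwise_topology (topspace X))"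
  by (simp add: Cp_def)

lemma Cp_eq_subtopology: "Cp X = subtopology (pointwise_topology (topspace X)) (topspace (Cp X))"
  unfolding Cp_def topspace_subtopology subtopology_restrict ..

lemma t1_space_Cp: "t1_space (Cp X)"
  by (simp add: Cp_def Hausdorff_space_product_topology Hausdorff_imp_t1_space t1_space_subtopology)

lemma openin_pointwise_near:
  assumes "finite J" "J \<subseteq> T"
  shows "openin (pointwise_topology T)
           {k \<in> topspace (pointwise_topology T). \<forall>j\<in>J. \<bar>k j - c j\<bar> < d}"
  using assms
proof (induction J rule: finite_induct)
  case (insert j J)
  have "openin (pointwise_topology T) {k \<in> topspace (pointwise_topology T). k j \<in> ball (c j) d}"
    by (rule openin_continuous_map_preimage[OF continuous_map_product_projection])
       (use insert in auto)
  moreover have "{k \<in> topspace (pointwise_topology T). \<forall>i\<in>insert j J. \<bar>k i - c i\<bar> < d}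
      = {k \<in> topspace (pointwise_topology T). k j \<in> ball (c j) d}
        \<inter> {k \<in> topspace (pointwise_topology T). \<forall>i\<in>J. \<bar>k i - c i\<bar> < d}"
    by (auto simp: dist_real_def abs_minus_commute)
  ultimately show ?case
    using insert by (simp add: openin_Int)
qed (use openin_topspace[of "pointwise_topology T"] in simp)

lemma limit_eq_cluster_value:
  fixes u :: "nat \<Rightarrow> real"
  assumes "u \<longlonglongrightarrow> a" and "\<And>d. d > 0 \<Longrightarrow> \<exists>\<^sub>F n in sequentially. \<bar>u n - b\<bar> < d"
  shows "b = a"
proof (rule ccontr)
  assume "b \<noteq> a"
  then have d: "\<bar>b - a\<bar> / 2 > 0" by simp
  have "\<forall>\<^sub>F n in sequentially. \<bar>u n - a\<bar> < \<bar>b - a\<bar> / 2"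
    using assms(1) d tendsto_iff[of u a sequentially] unfolding dist_real_def by blast
  with assms(2)[OF d]
  have "\<exists>\<^sub>F n in sequentially. \<bar>u n - a\<bar> < \<bar>b - a\<bar> / 2 \<and> \<bar>u n - b\<bar> < \<bar>b - a\<bar> / 2"
    by (rule frequently_eventually_conj)
  then obtain n where "\<bar>u n - a\<bar> < \<bar>b - a\<bar> / 2" "\<bar>u n - b\<bar> < \<bar>b - a\<bar> / 2"
    using frequently_ex by blast
  then show False
    by (simp add: abs_if split: if_split_asm)
qed

lemma derived_set_of_range_frequently_near:
  assumes h: "h \<in> Cp X derived_set_of range fs" and j: "j \<in> topspace X" and "d > 0"
  shows "\<exists>\<^sub>F n in sequentially. \<bar>fs n j - h j\<bar> < d"
proof (rule ccontr)
  assume "\<not> ?thesis"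
  then obtain N where N: "\<And>n. n \<ge> N \<Longrightarrow> \<not> \<bar>fs n j - h j\<bar> < d"
    by (auto simp: frequently_sequentially)
  define W where "W = {k \<in> topspace (pointwise_topology (topspace X)). \<forall>i\<in>{j}. \<bar>k i - h i\<bar> < d}"
  have "openin (Cp X) (W \<inter> topspace (Cp X))"
    using openin_pointwise_near[of "{j}" "topspace X" h d] j
    by (subst Cp_eq_subtopology) (auto simp: W_def openin_subtopology_Int)
  moreover have "h \<in> W \<inter> topspace (Cp X)"
    using h derived_set_of_subset_topspace topspace_Cp_subset \<open>d > 0\<close> by (fastforce simp: W_def)
  ultimately have "infinite (range fs \<inter> (W \<inter> topspace (Cp X)))"
    using h t1_space_Cp[of X] by (auto simp: t1_space_derived_set_of_infinite_openin)
  moreover have "range fs \<inter> (W \<inter> topspace (Cp X)) \<subseteq> fs ` {..<N}"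
    using N by (force simp: W_def not_le)
  ultimately show False
    using finite_subset by blast
qed

text \<open>The cluster point is a value taken infinitely often, or else an accumulation point of the
  range.\<close>
lemma relatively_countably_compact_Cp_cluster:
  assumes "relatively_countably_compact (Cp X) A" "A \<subseteq> topspace (Cp X)" "range fs \<subseteq> A"
  obtains h where "h \<in> topspace (Cp X)"
    and "\<And>j d. j \<in> topspace X \<Longrightarrow> d > 0 \<Longrightarrow> \<exists>\<^sub>F n in sequentially. \<bar>fs n j - h j\<bar> < d"
proof (cases "finite (range fs)")
  case True
  then obtain f where f: "f \<in> range fs" "infinite (fs -` {f})"
    using inf_img_fin_dom[of fs UNIV] by auto
  then have "\<exists>\<^sub>F n in sequentially. fs n = f"
    by (simp add: cofinite_eq_sequentially[symmetric] frequently_cofinite vimage_def)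
  then have "\<exists>\<^sub>F n in sequentially. \<bar>fs n j - f j\<bar> < d" if "d > 0" for j d
    by (rule frequently_elim1) (use that in simp)
  with f(1) assms(2,3) that show ?thesis by blast
next
  case False
  then obtain h where h: "h \<in> Cp X derived_set_of range fs"
    using assms(1,3) unfolding relatively_countably_compact_def by blast
  show ?thesis
  proof (rule that)
    show "h \<in> topspace (Cp X)"
      using h derived_set_of_subset_topspace[of "Cp X" "range fs"] by blast
  qed (rule derived_set_of_range_frequently_near[OF h])
qed

lemma relatively_countably_compact_Cp_pointwise_bounded:
  assumes "relatively_countably_compact (Cp X) A" "A \<subseteq> topspace (Cp X)" "x \<in> topspace X"
  shows "\<exists>M. \<forall>f\<in>A. \<bar>f x\<bar> \<le> M"
proof (rule ccontr)
  assume "\<not> ?thesis"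
  then have "\<forall>n::nat. \<exists>f\<in>A. \<bar>f x\<bar> > real n"
    by (meson not_le)
  then obtain fs where fs: "\<And>n. fs n \<in> A" "\<And>n. \<bar>fs n x\<bar> > real n"
    by metis
  obtain h where "\<exists>\<^sub>F n in sequentially. \<bar>fs n x - h x\<bar> < 1"
    using relatively_countably_compact_Cp_cluster[OF assms(1,2), of fs] fs(1) assms(3)
    by (metis image_subsetI zero_less_one)
  then obtain n where "n \<ge> nat \<lceil>\<bar>h x\<bar> + 1\<rceil>" "\<bar>fs n x - h x\<bar> < 1"
    by (auto simp: frequently_sequentially)
  with fs(2)[of n] show False
    by linarith
qed

lemma compactin_closure_of_pointwise_bounded:
  assumes A: "A \<subseteq> topspace (pointwise_topology T)" and bounded: "\<And>x. x \<in> T \<Longrightarrow> \<exists>M. \<forall>f\<in>A. \<bar>f x\<bar> \<le> M"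
  shows "compactin (pointwise_topology T) (pointwise_topology T closure_of A)"
proof -
  obtain M where M: "\<And>x f. x \<in> T \<Longrightarrow> f \<in> A \<Longrightarrow> \<bar>f x\<bar> \<le> M x"
    using bounded by metis
  define Box where "Box = PiE T (\<lambda>x. {- M x .. M x})"
  have "compactin (pointwise_topology T) Box"
    by (simp add: Box_def compactin_PiE)
  moreover have "A \<subseteq> Box"
    using A M by (fastforce simp: Box_def PiE_def abs_le_iff)
  ultimately show ?thesis
    by (meson Hausdorff_space_euclidean Hausdorff_space_product_topology closed_compactin
        closedin_closure_of closure_of_minimal compactin_imp_closedin)
qed

lemma closure_of_pointwise_sequence_on_countable:
  assumes g: "g \<in> pointwise_topology T closure_of A" and D: "countable D" "D \<subseteq> T"
  obtains fs where "range fs \<subseteq> A" "\<And>j. j \<in> D \<Longrightarrow> (\<lambda>n. fs n j) \<longlonglongrightarrow> g j"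
proof -
  \<comment> \<open>fs n is 1/(n+1)-close to g on the first n+1 points of an enumeration of D; the
    intersection with D matters only for D = {}, where from_nat_into is arbitrary.\<close>
  define J where "J n = D \<inter> from_nat_into D ` {..n}" for n
  have "\<exists>f\<in>A. \<forall>j\<in>J n. \<bar>f j - g j\<bar> < 1 / real (Suc n)" for n
  proof -
    define W where
      "W = {k \<in> topspace (pointwise_topology T). \<forall>j\<in>J n. \<bar>k j - g j\<bar> < 1 / real (Suc n)}"
    have "openin (pointwise_topology T) W"
      unfolding W_def using D by (intro openin_pointwise_near) (auto simp: J_def)
    moreover have "g \<in> W"
      using g by (simp add: in_closure_of W_def)
    ultimately obtain f where "f \<in> A" "f \<in> W"
      using g unfolding in_closure_of by blast
    then show ?thesis
      by (auto simp: W_def)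
  qed
  then obtain fs where fs: "\<And>n. fs n \<in> A" "\<And>n j. j \<in> J n \<Longrightarrow> \<bar>fs n j - g j\<bar> < 1 / real (Suc n)"
    by metis
  have "(\<lambda>n. fs n j) \<longlonglongrightarrow> g j" if j: "j \<in> D" for j
  proof (rule LIMSEQ_I)
    fix r :: real assume "r > 0"
    then obtain N where N: "1 / real (Suc N) < r"
      by (metis inverse_eq_divide reals_Archimedean)
    obtain i where i: "j = from_nat_into D i"
      using j D(1) by (metis from_nat_into_surj)
    have "norm (fs n j - g j) < r" if "n \<ge> max N i" for n
    proof -
      have "\<bar>fs n j - g j\<bar> < 1 / real (Suc n)"
        using fs(2) that i j by (auto simp: J_def)
      also have "\<dots> \<le> 1 / real (Suc N)"
        using that by (simp add: frac_le)
      finally show ?thesis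
        using N by simp
    qed
    then show "\<exists>N. \<forall>n\<ge>N. norm (fs n j - g j) < r" by blast
  qed
  with fs(1) that show ?thesis by blast
qed

lemma closure_of_Cp_eq_pointwise:
  assumes "A \<subseteq> topspace (Cp X)" "pointwise_topology (topspace X) closure_of A \<subseteq> topspace (Cp X)"
  shows "Cp X closure_of A = pointwise_topology (topspace X) closure_of A"
  using assms by (subst Cp_eq_subtopology) (simp add: closure_of_subtopology inf.absorb2)

lemma pointwise_closure_of_subset_Cp_if_compact:
  assumes "compactin (Cp X) (Cp X closure_of S)" "S \<subseteq> topspace (Cp X)"
  shows "pointwise_topology (topspace X) closure_of S \<subseteq> topspace (Cp X)"
proof -
  have "compactin (pointwise_topology (topspace X)) (Cp X closure_of S)"
    using assms(1) by (subst (asm) Cp_eq_subtopology) (simp add: compactin_subtopology)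
  then have "closedin (pointwise_topology (topspace X)) (Cp X closure_of S)"
    by (simp add: Hausdorff_space_product_topology compactin_imp_closedin)
  moreover have "S \<subseteq> Cp X closure_of S"
    using assms(2) closure_of_subset by blast
  ultimately show ?thesis
    by (meson closure_of_minimal closure_of_subset_topspace order_trans)
qed

lemma derived_set_of_Cp_nonempty_if_compact:
  assumes "compactin (pointwise_topology (topspace X)) Z" "Z \<subseteq> topspace (Cp X)"
    and "B \<subseteq> Z" "infinite B"
  shows "Cp X derived_set_of B \<noteq> {}"
proof -
  obtain h where "h \<in> Z" "h \<in> pointwise_topology (topspace X) derived_set_of B"
    using compactin_imp_Bolzano_Weierstrass[OF assms(1)] assms(3,4) by blast
  then have "h \<in> Cp X derived_set_of B"
    using assms(2,3) by (subst Cp_eq_subtopology) (auto simp: derived_set_of_subtopology Int_absorb1)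
  then show ?thesis by blast
qed

lemma indicator_in_closure_of_finite_indicators:
  assumes "A \<subseteq> T"
  shows "(restrict (indicator A) T :: 'a \<Rightarrow> real)
           \<in> pointwise_topology T closure_of {restrict (indicator F) T | F. finite F \<and> F \<subseteq> A}"
  unfolding in_closure_of
proof (intro conjI allI impI)
  show "restrict (indicator A) T \<in> topspace (pointwise_topology T)"
    by simp
  fix W assume W: "restrict (indicator A) T \<in> W \<and> openin (pointwise_topology T) W"
  then obtain U where U: "finite {i \<in> T. U i \<noteq> UNIV}" "restrict (indicator A) T \<in> PiE T U"
    "PiE T U \<subseteq> W"
    by (force simp: openin_product_topology_alt)
  define F where "F = {i \<in> T. U i \<noteq> UNIV} \<inter> A"
  have "restrict (indicator F) T i \<in> U i" if "i \<in> T" for i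
  proof (cases "U i = UNIV")
    case False
    then have "restrict (indicator F) T i = restrict (indicator A) T i"
      using that by (simp add: F_def indicator_def)
    then show ?thesis
      using U(2) that by (metis PiE_E)
  qed simp
  then have "restrict (indicator F) T \<in> W"
    using U(3) by auto
  moreover have "finite F" "F \<subseteq> A"
    using U(1) by (auto simp: F_def)
  ultimately show "\<exists>f. f \<in> {restrict (indicator F) T |F. finite F \<and> F \<subseteq> A} \<and> f \<in> W"
    by blast
qed

locale isolated_except =
  fixes X :: "'a topology" and p :: 'a
  assumes point_in_topspace: "p \<in> topspace X"
    and isolated: "\<And>y. y \<in> topspace X \<Longrightarrow> y \<noteq> p \<Longrightarrow> openin X {y}"
begin

lemma continuous_map_iff_near_point:
  "continuous_map X euclideanreal g \<longleftrightarrow>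
     (\<forall>e>0. \<exists>U. openin X U \<and> p \<in> U \<and> (\<forall>y\<in>U. \<bar>g y - g p\<bar> < e))"
proof
  assume g: "continuous_map X euclideanreal g"
  show "\<forall>e>0. \<exists>U. openin X U \<and> p \<in> U \<and> (\<forall>y\<in>U. \<bar>g y - g p\<bar> < e)"
  proof (intro allI impI)
    fix e :: real assume "e > 0"
    then show "\<exists>U. openin X U \<and> p \<in> U \<and> (\<forall>y\<in>U. \<bar>g y - g p\<bar> < e)"
      using openin_continuous_map_preimage[OF g, of "ball (g p) e"] point_in_topspace
      by (intro exI[of _ "{y \<in> topspace X. g y \<in> ball (g p) e}"]) (auto simp: dist_real_def)
  qed
next
  assume near: "\<forall>e>0. \<exists>U. openin X U \<and> p \<in> U \<and> (\<forall>y\<in>U. \<bar>g y - g p\<bar> < e)"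
  show "continuous_map X euclideanreal g"
    unfolding continuous_map_def
  proof (intro conjI allI impI)
    fix V :: "real set" assume "openin euclideanreal V"
    show "openin X {x \<in> topspace X. g x \<in> V}"
    proof (subst openin_subopen, intro ballI)
      fix x assume x: "x \<in> {x \<in> topspace X. g x \<in> V}"
      show "\<exists>T. openin X T \<and> x \<in> T \<and> T \<subseteq> {x \<in> topspace X. g x \<in> V}"
      proof (cases "x = p")
        case True
        have "open V"
          using \<open>openin euclideanreal V\<close> by simp
        then obtain e where e: "e > 0" "ball (g p) e \<subseteq> V"
          using x True open_contains_ball by blast
        then obtain U where U: "openin X U" "p \<in> U" "\<forall>y\<in>U. \<bar>g y - g p\<bar> < e"
          using near by blast
        have "U \<subseteq> {x \<in> topspace X. g x \<in> V}"
          using U e openin_subset[OF U(1)] by (force simp: dist_real_def abs_minus_commute)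
        then show ?thesis
          using U True by blast
      next
        case False
        then show ?thesis
          using x isolated by (intro exI[of _ "{x}"]) auto
      qed
    qed
  qed simp
qed

lemma Cp_contains_supported_off_point:
  assumes "p \<notin> X closure_of C"
  shows "PiE (topspace X) (\<lambda>y. if y \<in> C then R else {0}) \<subseteq> topspace (Cp X)"
proof
  fix h assume h: "h \<in> PiE (topspace X) (\<lambda>y. if y \<in> C then R else {0})"
  obtain U where U: "openin X U" "p \<in> U" "U \<inter> C = {}"
    using assms point_in_topspace by (auto simp: in_closure_of)
  have "h y = 0" if "y \<in> U" for y
  proof -
    have "y \<in> topspace X" "y \<notin> C"
      using U openin_subset[OF U(1)] that by auto
    then show ?thesis
      using PiE_mem[OF h] by fastforce
  qed
  then have "continuous_map X euclideanreal h"
    using U by (subst continuous_map_iff_near_point) (metis abs_zero diff_self)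
  then show "h \<in> topspace (Cp X)"
    using h by (simp add: topspace_Cp PiE_def)
qed

lemma discontinuity_witnessed_countably:
  assumes tight: "countable_tightness X" and "\<not> continuous_map X euclideanreal g"
  obtains e C where "e > 0" "countable C" "C \<subseteq> topspace X" "p \<in> X closure_of C"
    "\<And>y. y \<in> C \<Longrightarrow> \<bar>g y - g p\<bar> \<ge> e"
proof -
  obtain e where "e > 0" and far: "\<And>U. openin X U \<Longrightarrow> p \<in> U \<Longrightarrow> \<exists>y\<in>U. \<bar>g y - g p\<bar> \<ge> e"
    using assms(2) by (metis continuous_map_iff_near_point not_less)
  define Q where "Q = {y \<in> topspace X. \<bar>g y - g p\<bar> \<ge> e}"
  have "p \<in> X closure_of Q"
    unfolding in_closure_of
  proof (intro conjI allI impI)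
    fix U assume U: "p \<in> U \<and> openin X U"
    then obtain y where "y \<in> U" "\<bar>g y - g p\<bar> \<ge> e"
      using far by blast
    then show "\<exists>y. y \<in> Q \<and> y \<in> U"
      using U openin_subset by (fastforce simp: Q_def)
  qed (rule point_in_topspace)
  moreover have "Q \<subseteq> topspace X"
    by (auto simp: Q_def)
  ultimately obtain C where "C \<subseteq> Q" "countable C" "p \<in> X closure_of C"
    using tight unfolding countable_tightness_def by blast
  with \<open>e > 0\<close> that show ?thesis
    by (auto simp: Q_def)
qed

lemma pointwise_closure_of_subset_Cp:
  assumes tight: "countable_tightness X"
    and A: "relatively_countably_compact (Cp X) A" "A \<subseteq> topspace (Cp X)"
  shows "pointwise_topology (topspace X) closure_of A \<subseteq> topspace (Cp X)"
proof
  fix g assume g: "g \<in> pointwise_topology (topspace X) closure_of A"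
  have "continuous_map X euclideanreal g"
  proof (rule ccontr)
    assume "\<not> continuous_map X euclideanreal g"
    then obtain e C where "e > 0" "countable C" "C \<subseteq> topspace X" "p \<in> X closure_of C"
      and far: "\<And>y. y \<in> C \<Longrightarrow> \<bar>g y - g p\<bar> \<ge> e"
      using discontinuity_witnessed_countably[OF tight] by blast
    then have D: "countable (insert p C)" "insert p C \<subseteq> topspace X"
      using point_in_topspace by auto
    obtain fs where fs: "range fs \<subseteq> A" "\<And>j. j \<in> insert p C \<Longrightarrow> (\<lambda>n. fs n j) \<longlonglongrightarrow> g j"
      using closure_of_pointwise_sequence_on_countable[OF g D] by blast
    obtain h where h: "h \<in> topspace (Cp X)"
      "\<And>j d. j \<in> topspace X \<Longrightarrow> d > 0 \<Longrightarrow> \<exists>\<^sub>F n in sequentially. \<bar>fs n j - h j\<bar> < d"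
      using relatively_countably_compact_Cp_cluster[OF A fs(1)] by blast
    have hg: "h j = g j" if "j \<in> insert p C" for j
      by (rule limit_eq_cluster_value[OF fs(2)[OF that]]) (use h(2) D(2) that in blast)
    have "continuous_map X euclideanreal h"
      using h(1) by (simp add: topspace_Cp)
    then obtain U where "openin X U" "p \<in> U" "\<forall>y\<in>U. \<bar>h y - h p\<bar> < e"
      using \<open>e > 0\<close> continuous_map_iff_near_point by blast
    then obtain y where "y \<in> C" "\<bar>h y - h p\<bar> < e"
      using \<open>p \<in> X closure_of C\<close> unfolding in_closure_of by blast
    with far hg show False
      by fastforce
  qed
  moreover have "g \<in> extensional (topspace X)"
    using g by (simp add: in_closure_of PiE_def)
  ultimately show "g \<in> topspace (Cp X)"
    by (simp add: topspace_Cp)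
qed

theorem g_space_Cp_if_countable_tightness:
  assumes "countable_tightness X"
  shows "g_space (Cp X)"
  unfolding g_space_iff_relatively_countably_compact
proof (intro allI impI)
  fix A assume A: "A \<subseteq> topspace (Cp X)" "relatively_countably_compact (Cp X) A"
  have closure: "pointwise_topology (topspace X) closure_of A \<subseteq> topspace (Cp X)"
    using pointwise_closure_of_subset_Cp[OF assms A(2,1)] .
  have "compactin (pointwise_topology (topspace X)) (pointwise_topology (topspace X) closure_of A)"
    using A topspace_Cp_subset
    by (intro compactin_closure_of_pointwise_bounded relatively_countably_compact_Cp_pointwise_bounded)
       auto
  with closure show "compactin (Cp X) (Cp X closure_of A)"
    unfolding closure_of_Cp_eq_pointwise[OF A(1) closure]
    by (subst Cp_eq_subtopology) (simp add: compactin_subtopology)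
qed

lemma finite_indicators_relatively_countably_compact:
  assumes far: "\<And>B. B \<subseteq> A \<Longrightarrow> countable B \<Longrightarrow> p \<notin> X closure_of B"
  shows "relatively_countably_compact (Cp X)
           {restrict (indicator F) (topspace X) :: 'a \<Rightarrow> real | F. finite F \<and> F \<subseteq> A}"
  unfolding relatively_countably_compact_def
proof (intro allI impI)
  fix B :: "('a \<Rightarrow> real) set"
  assume B: "B \<subseteq> {restrict (indicator F) (topspace X) | F. finite F \<and> F \<subseteq> A}" "infinite B"
  obtain f :: "nat \<Rightarrow> _" where f: "inj f" "range f \<subseteq> B"
    using infinite_countable_subset[of B] B by auto
  have "\<forall>n. \<exists>F. f n = restrict (indicator F) (topspace X) \<and> finite F \<and> F \<subseteq> A"
    using B f(2) by blast
  then obtain F where F: "\<And>n. f n = restrict (indicator (F n)) (topspace X)"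
    "\<And>n. finite (F n)" "\<And>n. F n \<subseteq> A"
    unfolding choice_iff by blast
  define C where "C = (\<Union>n. F n)"
  define Z where "Z = PiE (topspace X) (\<lambda>y. if y \<in> C then {0, 1} else {0::real})"
  have "countable C" "C \<subseteq> A"
    using F by (auto simp: C_def countable_finite)
  have "compactin (pointwise_topology (topspace X)) Z"
    by (simp add: Z_def compactin_PiE finite_imp_compact)
  moreover have "Z \<subseteq> topspace (Cp X)"
    unfolding Z_def using far \<open>countable C\<close> \<open>C \<subseteq> A\<close> by (intro Cp_contains_supported_off_point) blast
  moreover have "range f \<subseteq> Z"
    using F by (auto simp: Z_def C_def indicator_def PiE_def)
  moreover have "infinite (range f)"
    using f(1) range_inj_infinite by blast
  ultimately have "Cp X derived_set_of range f \<noteq> {}"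
    by (rule derived_set_of_Cp_nonempty_if_compact)
  then show "Cp X derived_set_of B \<noteq> {}"
    using derived_set_of_mono[OF f(2)] by blast
qed

lemma point_in_closure_of_countable_if_g_space_Cp:
  assumes g_space: "g_space (Cp X)" and A: "A \<subseteq> topspace X" "p \<in> X closure_of A"
  shows "\<exists>B\<subseteq>A. countable B \<and> p \<in> X closure_of B"
proof (rule ccontr)
  assume "\<not> ?thesis"
  then have far: "\<And>B. B \<subseteq> A \<Longrightarrow> countable B \<Longrightarrow> p \<notin> X closure_of B"
    by blast
  define S where "S = {restrict (indicator F) (topspace X) :: 'a \<Rightarrow> real | F. finite F \<and> F \<subseteq> A}"
  define ind where "ind = (restrict (indicator A) (topspace X) :: 'a \<Rightarrow> real)"
  have S: "S \<subseteq> topspace (Cp X)"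
  proof
    fix f assume "f \<in> S"
    then obtain F where F: "f = restrict (indicator F) (topspace X)" "finite F" "F \<subseteq> A"
      by (auto simp: S_def)
    have "f \<in> PiE (topspace X) (\<lambda>y. if y \<in> F then {0, 1} else {0::real})"
      using F(1) by (auto simp: indicator_def)
    then show "f \<in> topspace (Cp X)"
      using Cp_contains_supported_off_point[OF far[OF F(3) countable_finite[OF F(2)]]] by blast
  qed
  have "relatively_countably_compact (Cp X) S"
    unfolding S_def using far by (rule finite_indicators_relatively_countably_compact)
  then have "compactin (Cp X) (Cp X closure_of S)"
    using g_space S unfolding g_space_iff_relatively_countably_compact by blast
  then have "pointwise_topology (topspace X) closure_of S \<subseteq> topspace (Cp X)"
    using S by (rule pointwise_closure_of_subset_Cp_if_compact)
  then have "ind \<in> topspace (Cp X)"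
    using indicator_in_closure_of_finite_indicators[OF A(1)] by (auto simp: S_def ind_def)
  then have "continuous_map X euclideanreal ind"
    by (simp add: topspace_Cp)
  then obtain U where U: "openin X U" "p \<in> U" "\<forall>y\<in>U. \<bar>ind y - ind p\<bar> < 1"
    unfolding continuous_map_iff_near_point using zero_less_one by blast
  obtain y where y: "y \<in> A" "y \<in> U"
    using A(2) U(1,2) unfolding in_closure_of by blast
  have "p \<notin> A"
    using far[of "{p}"] closure_of_subset[of "{p}" X] point_in_topspace by auto
  then have "ind y - ind p = 1"
    using y(1) A(1) point_in_topspace by (auto simp: ind_def)
  with U(3) y(2) show False
    by fastforce
qed

theorem countable_tightness_if_g_space_Cp:
  assumes "g_space (Cp X)"
  shows "countable_tightness X"
  unfolding countable_tightness_def
proof (intro allI impI ballI)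
  fix A x assume A: "A \<subseteq> topspace X" and x: "x \<in> X closure_of A"
  show "\<exists>B\<subseteq>A. countable B \<and> x \<in> X closure_of B"
  proof (cases "x = p")
    case True
    then show ?thesis
      using point_in_closure_of_countable_if_g_space_Cp[OF assms A] x by blast
  next
    case False
    have "x \<in> topspace X"
      using x by (simp add: in_closure_of)
    then have "x \<in> A"
      using x isolated[OF _ False] unfolding in_closure_of by blast
    then show ?thesis
      using A closure_of_subset[of "{x}" X] \<open>x \<in> topspace X\<close> by blast
  qed
qed

end

theorem corollary2:
  fixes X :: "'a topology"
  assumes "tychonoff_space X" and "almost_discrete X"
  shows "weakly_Grothendieck X \<longleftrightarrow> countable_tightness X"
proof -
  obtain p where "p \<in> topspace X" "\<And>y. y \<in> topspace X \<Longrightarrow> y \<noteq> p \<Longrightarrow> openin X {y}"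
    using assms(2) unfolding almost_discrete_def by blast
  then interpret isolated_except X p
    by unfold_locales
  show ?thesis
    unfolding weakly_Grothendieck_def
    using g_space_Cp_if_countable_tightness countable_tightness_if_g_space_Cp by blast
qed

end
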